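(* Let $K\subset\mathbb{R}^n$ be a nonempty compact convex set and let $\{H_m\}_{m\in\mathbb{N}}$ be a sequence of linear subspaces of $\mathbb{R}^n$ (not necessarily of the same dimension) such that the sequence \[K_m:=M_{H_m}\cdots M_{H_1}K\] converges in the Hausdorff metric to a compact convex set $L$. Then for every nonempty compact set $\tilde K\subset\mathbb{R}^n$ with $\mathrm{conv}(\tilde K)=K$, the sequence $\tilde K_m:=M_{H_m}\cdots M_{H_1}\tilde K$ also converges in the Hausdorff metric to $L$.
   Context: For a linear subspace $H$, $R_Hx=2(x|H)-x$ is the reflection with respect to $H$ ($x|H$ the orthogonal projection). The Minkowski symmetrization is $M_HC:=\frac12(C+R_HC)$, with $X+Y=\{x+y:x\in X,y\in Y\}$ and $tX=\{tx:x\in X\}$. $\mathrm{conv}$ denotes convex hull. *)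

theory Defs
  imports "HOL-Analysis.Analysis"
begin

definition orth_proj :: "'a::euclidean_space set \<Rightarrow> 'a \<Rightarrow> 'a" where
  "orth_proj H x = (THE p. p \<in> H \<and> (\<forall>h\<in>H. (x - p) \<bullet> h = 0))"

definition refl_sub :: "'a::euclidean_space set \<Rightarrow> 'a \<Rightarrow> 'a" where
  "refl_sub H x = 2 *\<^sub>R orth_proj H x - x"

definition mink_sym :: "'a::euclidean_space set \<Rightarrow> 'a set \<Rightarrow> 'a set" where
  "mink_sym H C = (\<lambda>v. (1/2) *\<^sub>R v) ` {x + y | x y. x \<in> C \<and> y \<in> refl_sub H ` C}"

text \<open>Iterated symmetrization: sym_iter H K m = M_{H m} ... M_{H 1} K
  (H 0 is unused; sym_iter H K 0 = K).\<close>
primrec sym_iter :: "(nat \<Rightarrow> 'a::euclidean_space set) \<Rightarrow> 'a set \<Rightarrow> nat \<Rightarrow> 'a set" where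
  "sym_iter H K 0 = K"
| "sym_iter H K (Suc m) = mink_sym (H (Suc m)) (sym_iter H K m)"

text \<open>Hausdorff distance (for nonempty bounded sets).\<close>
definition hausdorff_dist :: "'a::metric_space set \<Rightarrow> 'a set \<Rightarrow> real" where
  "hausdorff_dist A B = max (SUP a\<in>A. infdist a B) (SUP b\<in>B. infdist b A)"

end

theory Submission
  imports Defs
begin

text \<open>Call \<open>B\<close> a \<open>c\<close>-approximation of \<open>A\<close> (\<open>sq_approx c A B\<close>) if every point \<open>p\<close> is,
  up to \<open>c\<close> in squared distance, as close to some point of \<open>B\<close> as to any given point of \<open>A\<close>.
  A bounded set \<open>B\<close> is a \<open>(diam B)\<^sup>2\<close>-approximation of its convex hull: for \<open>x \<in> conv B\<close>
  some \<open>y \<in> B\<close> lies on the side of \<open>p\<close> of the hyperplane through \<open>x\<close> orthogonal to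
  \<open>x - p\<close>, so \<open>|p - y|\<^sup>2 \<le> |p - x|\<^sup>2 + |y - x|\<^sup>2\<close>. A Minkowski symmetrization halves \<open>c\<close>:
  for a point \<open>(u + R\<^sub>H v)/2\<close> of \<open>M\<^sub>H A\<close>, approximating first \<open>u\<close> and then \<open>v\<close>, each at twice
  the scale, costs \<open>2c/4\<close>. Hence \<open>M\<^sub>H\<^sub>m\<cdots>M\<^sub>H\<^sub>1 K\<close> contains \<open>M\<^sub>H\<^sub>m\<cdots>M\<^sub>H\<^sub>1 K'\<close> within Hausdorff
  distance \<open>diam K' / 2\<^bsup>m/2\<^esup>\<close>, and the triangle inequality concludes.\<close>

lemma orth_proj_eqI:
  assumes "subspace H" "p \<in> H" "\<And>h. h \<in> H \<Longrightarrow> (x - p) \<bullet> h = 0"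
  shows "orth_proj H x = p"
  unfolding orth_proj_def
proof (rule the_equality)
  show "p \<in> H \<and> (\<forall>h\<in>H. (x - p) \<bullet> h = 0)"
    using assms by blast
next
  fix q assume q: "q \<in> H \<and> (\<forall>h\<in>H. (x - q) \<bullet> h = 0)"
  have "p - q \<in> H"
    using assms q subspace_diff by blast
  then have "(x - q) \<bullet> (p - q) - (x - p) \<bullet> (p - q) = 0"
    using assms q by simp
  then have "(p - q) \<bullet> (p - q) = 0"
    by (simp add: inner_diff_left)
  then show "q = p" by simp
qed

lemma subspace_orthogonal_decomp:
  fixes H :: "'a::euclidean_space set" and x :: 'a
  assumes "subspace H"
  obtains p z where "p \<in> H" "\<And>h. h \<in> H \<Longrightarrow> z \<bullet> h = 0" "x = p + z"
proof -
  have "span H = H"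
    using assms span_eq_iff by blast
  then show thesis
    using orthogonal_subspace_decomp_exists[of H x] that by (metis orthogonal_def)
qed

lemma orth_proj_mem_orthogonal:
  fixes H :: "'a::euclidean_space set"
  assumes "subspace H"
  shows "orth_proj H x \<in> H" "h \<in> H \<Longrightarrow> (x - orth_proj H x) \<bullet> h = 0"
proof -
  obtain p z where "p \<in> H" "\<And>h. h \<in> H \<Longrightarrow> z \<bullet> h = 0" "x = p + z"
    using subspace_orthogonal_decomp[OF assms, where x=x] by blast
  moreover from this have "orth_proj H x = p"
    using orth_proj_eqI[OF assms] by simp
  ultimately show "orth_proj H x \<in> H" "h \<in> H \<Longrightarrow> (x - orth_proj H x) \<bullet> h = 0"
    by simp_all
qed

lemma linear_orth_proj:
  fixes H :: "'a::euclidean_space set"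
  assumes "subspace H"
  shows "linear (orth_proj H)"
proof (rule linearI)
  note proj = orth_proj_mem_orthogonal[OF assms]
  show "orth_proj H (x + y) = orth_proj H x + orth_proj H y" for x y
  proof (rule orth_proj_eqI[OF assms])
    show "orth_proj H x + orth_proj H y \<in> H"
      using proj assms subspace_add by blast
    fix h assume "h \<in> H"
    then have "(x - orth_proj H x) \<bullet> h + (y - orth_proj H y) \<bullet> h = 0"
      using proj by simp
    then show "(x + y - (orth_proj H x + orth_proj H y)) \<bullet> h = 0"
      by (simp add: algebra_simps inner_diff_left inner_add_left)
  qed
  show "orth_proj H (c *\<^sub>R x) = c *\<^sub>R orth_proj H x" for c x
  proof (rule orth_proj_eqI[OF assms])
    show "c *\<^sub>R orth_proj H x \<in> H"
      using proj assms subspace_scale by blast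
    fix h assume "h \<in> H"
    then have "c * ((x - orth_proj H x) \<bullet> h) = 0"
      using proj by simp
    then show "(c *\<^sub>R x - c *\<^sub>R orth_proj H x) \<bullet> h = 0"
      by (simp flip: scaleR_diff_right)
  qed
qed

lemma linear_refl_sub:
  fixes H :: "'a::euclidean_space set"
  assumes "subspace H"
  shows "linear (refl_sub H)"
  using linear_orth_proj[OF assms]
  by (auto simp: linear_iff refl_sub_def algebra_simps)

lemma refl_sub_orthogonal_decomp:
  assumes "subspace H" "p \<in> H" "\<And>h. h \<in> H \<Longrightarrow> z \<bullet> h = 0"
  shows "refl_sub H (p + z) = p - z"
  using orth_proj_eqI[of H p "p + z"] assms by (simp add: refl_sub_def scaleR_2)

lemma refl_sub_involution:
  fixes H :: "'a::euclidean_space set"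
  assumes "subspace H"
  shows "refl_sub H (refl_sub H x) = x"
proof -
  obtain p z where pz: "p \<in> H" "\<And>h. h \<in> H \<Longrightarrow> z \<bullet> h = 0" "x = p + z"
    using subspace_orthogonal_decomp[OF assms, where x=x] by blast
  have "refl_sub H (p + - z) = p + z"
    using refl_sub_orthogonal_decomp[OF assms pz(1), of "- z"] pz(2) by simp
  then show ?thesis
    using refl_sub_orthogonal_decomp[OF assms pz(1,2)] pz(3) by simp
qed

lemma norm_refl_sub:
  fixes H :: "'a::euclidean_space set"
  assumes "subspace H"
  shows "norm (refl_sub H x) = norm x"
proof -
  obtain p z where pz: "p \<in> H" "\<And>h. h \<in> H \<Longrightarrow> z \<bullet> h = 0" "x = p + z"
    using subspace_orthogonal_decomp[OF assms, where x=x] by blast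
  then have "orthogonal p z" "orthogonal p (- z)"
    by (simp_all add: orthogonal_def inner_commute)
  then have "(norm (p - z))\<^sup>2 = (norm (p + z))\<^sup>2"
    using norm_add_Pythagorean by (metis diff_conv_add_uminus norm_minus_cancel)
  then show ?thesis
    using refl_sub_orthogonal_decomp[OF assms pz(1,2)] pz(3) by simp
qed

lemma mink_sym_mono: "C \<subseteq> D \<Longrightarrow> mink_sym H C \<subseteq> mink_sym H D"
  unfolding mink_sym_def by blast

lemma sym_iter_mono: "A \<subseteq> B \<Longrightarrow> sym_iter H A m \<subseteq> sym_iter H B m"
  by (induction m) (auto dest: mink_sym_mono)

lemma sym_iter_nonempty:
  assumes "A \<noteq> {}"
  shows "sym_iter H A m \<noteq> {}"
proof (induction m)
  case 0
  then show ?case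
    using assms by simp
next
  case (Suc m)
  then obtain a where "a \<in> sym_iter H A m"
    by blast
  then have "(1/2) *\<^sub>R (a + refl_sub (H (Suc m)) a) \<in> sym_iter H A (Suc m)"
    unfolding sym_iter.simps mink_sym_def by blast
  then show ?case
    by blast
qed

lemma compact_mink_sym:
  fixes C :: "'a::euclidean_space set"
  assumes "subspace H" "compact C"
  shows "compact (mink_sym H C)"
proof -
  have "compact (refl_sub H ` C)"
    using linear_refl_sub[OF assms(1)] assms(2)
    by (intro compact_continuous_image linear_continuous_on) (simp add: linear_conv_bounded_linear)
  then show ?thesis
    unfolding mink_sym_def using compact_scaling compact_sums assms(2) by blast
qed

lemma compact_sym_iter:
  assumes "\<And>m. subspace (H m)" "compact A"
  shows "compact (sym_iter H A m)"
  by (induction m) (simp_all add: assms compact_mink_sym)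

definition sq_approx :: "real \<Rightarrow> 'a::metric_space set \<Rightarrow> 'a set \<Rightarrow> bool" where
  "sq_approx c A B \<longleftrightarrow> (\<forall>x\<in>A. \<forall>p. \<exists>y\<in>B. (dist p y)\<^sup>2 \<le> (dist p x)\<^sup>2 + c)"

lemma sq_approx_convex_hull:
  fixes B :: "'a::euclidean_space set"
  assumes "bounded B"
  shows "sq_approx ((diameter B)\<^sup>2) (convex hull B) B"
  unfolding sq_approx_def
proof (intro ballI allI)
  fix x p assume x: "x \<in> convex hull B"
  have "\<exists>y\<in>B. (x - p) \<bullet> (y - x) \<le> 0"
  proof (rule ccontr)
    assume "\<not> ?thesis"
    then have "B \<subseteq> {z. (x - p) \<bullet> z > (x - p) \<bullet> x}"
      by (auto simp: inner_diff_right)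
    then have "convex hull B \<subseteq> {z. (x - p) \<bullet> z > (x - p) \<bullet> x}"
      by (rule hull_minimal) (rule convex_halfspace_gt)
    then show False
      using x by auto
  qed
  then obtain y where y: "y \<in> B" "(x - p) \<bullet> (y - x) \<le> 0" ..
  have "B \<subseteq> cball y (diameter B)"
    using diameter_bounded_bound[OF assms y(1)] by auto
  then have "convex hull B \<subseteq> cball y (diameter B)"
    by (rule hull_minimal) (rule convex_cball)
  then have "dist y x \<le> diameter B"
    using x by auto
  then have "(dist y x)\<^sup>2 \<le> (diameter B)\<^sup>2"
    by (simp add: power_mono)
  moreover have "(dist p y)\<^sup>2 = (dist p x)\<^sup>2 + 2 * ((x - p) \<bullet> (y - x)) + (dist y x)\<^sup>2"
    using dot_norm[of "x - p" "y - x"] by (simp add: dist_norm norm_minus_commute)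
  ultimately show "\<exists>y\<in>B. (dist p y)\<^sup>2 \<le> (dist p x)\<^sup>2 + (diameter B)\<^sup>2"
    using y by (intro bexI[of _ y]) auto
qed

lemma sq_approx_reflected_average:
  fixes R :: "'a::real_normed_vector \<Rightarrow> 'a"
  assumes R: "linear R" "\<And>x. norm (R x) = norm x" "\<And>x. R (R x) = x"
    and approx: "sq_approx c A B"
  shows "sq_approx (c / 2)
           ((\<lambda>v. (1/2) *\<^sub>R v) ` {x + y | x y. x \<in> A \<and> y \<in> R ` A})
           ((\<lambda>v. (1/2) *\<^sub>R v) ` {x + y | x y. x \<in> B \<and> y \<in> R ` B})"
  unfolding sq_approx_def
proof (intro ballI allI)
  fix x p assume "x \<in> (\<lambda>v. (1/2) *\<^sub>R v) ` {x + y | x y. x \<in> A \<and> y \<in> R ` A}"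
  then obtain u v where uv: "u \<in> A" "v \<in> A" "x = (1/2) *\<^sub>R (u + R v)"
    by blast
  have dist_R: "dist (R q) w = norm (q - R w)" for q w
    using R by (metis dist_norm linear_diff)
  txt \<open>\<open>u\<close> is approximated as seen from \<open>2p - R v\<close>, then \<open>v\<close> as seen from \<open>R (2p - a)\<close>.\<close>
  obtain a where a: "a \<in> B" "(dist (2 *\<^sub>R p - R v) a)\<^sup>2 \<le> (dist (2 *\<^sub>R p - R v) u)\<^sup>2 + c"
    using approx uv(1) unfolding sq_approx_def by blast
  obtain b where b: "b \<in> B" "(dist (R (2 *\<^sub>R p - a)) b)\<^sup>2 \<le> (dist (R (2 *\<^sub>R p - a)) v)\<^sup>2 + c"
    using approx uv(2) unfolding sq_approx_def by blast
  define y where "y = (1/2) *\<^sub>R (a + R b)"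
  have y_mem: "y \<in> (\<lambda>v. (1/2) *\<^sub>R v) ` {x + y | x y. x \<in> B \<and> y \<in> R ` B}"
    using a(1) b(1) unfolding y_def by blast
  have py: "dist p y = (1/2) * dist (R (2 *\<^sub>R p - a)) b"
  proof -
    have "p - y = (1/2) *\<^sub>R (2 *\<^sub>R p - a - R b)"
      by (simp add: y_def algebra_simps)
    then show ?thesis
      unfolding dist_R by (simp add: dist_norm)
  qed
  have av: "dist (R (2 *\<^sub>R p - a)) v = dist (2 *\<^sub>R p - R v) a"
    unfolding dist_R by (simp add: dist_norm algebra_simps)
  have ux: "dist (2 *\<^sub>R p - R v) u = 2 * dist p x"
  proof -
    have "2 *\<^sub>R p - R v - u = 2 *\<^sub>R (p - x)"
      by (simp add: uv(3) algebra_simps)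
    then show ?thesis
      by (simp add: dist_norm)
  qed
  have "(dist p y)\<^sup>2 = (1/4) * (dist (R (2 *\<^sub>R p - a)) b)\<^sup>2"
    by (simp add: py power_mult_distrib power_divide)
  also have "\<dots> \<le> (1/4) * ((dist (2 *\<^sub>R p - R v) a)\<^sup>2 + c)"
    using b(2) av by simp
  also have "\<dots> \<le> (1/4) * ((2 * dist p x)\<^sup>2 + 2 * c)"
    using a(2) ux by simp
  also have "\<dots> = (dist p x)\<^sup>2 + c / 2"
    by (simp add: power_mult_distrib)
  finally show "\<exists>y\<in>(\<lambda>v. (1/2) *\<^sub>R v) ` {x + y | x y. x \<in> B \<and> y \<in> R ` B}.
                  (dist p y)\<^sup>2 \<le> (dist p x)\<^sup>2 + c / 2"
    using y_mem by blast
qed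

lemma sq_approx_mink_sym:
  fixes H :: "'a::euclidean_space set"
  assumes "subspace H" "sq_approx c A B"
  shows "sq_approx (c / 2) (mink_sym H A) (mink_sym H B)"
  unfolding mink_sym_def
  using assms by (intro sq_approx_reflected_average linear_refl_sub norm_refl_sub refl_sub_involution)

lemma sq_approx_sym_iter:
  assumes "\<And>m. subspace (H m)" "sq_approx c A B"
  shows "sq_approx (c / 2 ^ m) (sym_iter H A m) (sym_iter H B m)"
proof (induction m)
  case 0
  then show ?case
    using assms(2) by simp
next
  case (Suc m)
  show ?case
    using sq_approx_mink_sym[OF assms(1)[of "Suc m"] Suc.IH] by (simp add: mult.commute)
qed

lemma bdd_above_infdist_image:
  fixes A B :: "'a::metric_space set"
  assumes "bounded A" "B \<noteq> {}"
  shows "bdd_above ((\<lambda>a. infdist a B) ` A)"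
proof -
  obtain b where b: "b \<in> B"
    using assms(2) by blast
  obtain e where e: "\<And>a. a \<in> A \<Longrightarrow> dist b a \<le> e"
    using assms(1) bounded_any_center by metis
  have "infdist a B \<le> e" if "a \<in> A" for a
    using infdist_le[OF b, of a] e[OF that] by (simp add: dist_commute)
  then show ?thesis
    by (intro bdd_aboveI2)
qed

lemma hausdorff_dist_commute: "hausdorff_dist A B = hausdorff_dist B A"
  unfolding hausdorff_dist_def by (rule max.commute)

lemma infdist_le_hausdorff_dist:
  assumes "a \<in> A" "bounded A" "B \<noteq> {}"
  shows "infdist a B \<le> hausdorff_dist A B"
  unfolding hausdorff_dist_def
  using cSUP_upper[OF assms(1) bdd_above_infdist_image[OF assms(2,3)]] by simp

lemma hausdorff_dist_nonneg:
  assumes "A \<noteq> {}" "bounded A" "B \<noteq> {}"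
  shows "0 \<le> hausdorff_dist A B"
proof -
  obtain a where a: "a \<in> A"
    using assms(1) by blast
  show ?thesis
    using infdist_le_hausdorff_dist[OF a assms(2,3)] infdist_nonneg[of a B] by linarith
qed

lemma hausdorff_dist_le:
  assumes "A \<noteq> {}" "B \<noteq> {}"
    and "\<And>a. a \<in> A \<Longrightarrow> infdist a B \<le> e" "\<And>b. b \<in> B \<Longrightarrow> infdist b A \<le> e"
  shows "hausdorff_dist A B \<le> e"
  unfolding hausdorff_dist_def using assms by (simp add: cSUP_least)

lemma infdist_le_infdist_add_hausdorff_dist:
  assumes "B \<noteq> {}" "bounded B" "C \<noteq> {}"
  shows "infdist a C \<le> infdist a B + hausdorff_dist B C"
proof -
  have "infdist a C - hausdorff_dist B C \<le> dist a b" if "b \<in> B" for b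
    using infdist_triangle[of a C b] infdist_le_hausdorff_dist[OF that assms(2,3)]
    by (simp add: dist_commute)
  then have "infdist a C - hausdorff_dist B C \<le> (INF b\<in>B. dist a b)"
    using assms(1) by (intro cINF_greatest)
  then show ?thesis
    using assms(1) by (simp add: infdist_notempty)
qed

lemma hausdorff_dist_triangle:
  assumes "A \<noteq> {}" "bounded A" "B \<noteq> {}" "bounded B" "C \<noteq> {}" "bounded C"
  shows "hausdorff_dist A C \<le> hausdorff_dist A B + hausdorff_dist B C"
proof (rule hausdorff_dist_le)
  fix a assume a: "a \<in> A"
  have "infdist a C \<le> infdist a B + hausdorff_dist B C"
    using infdist_le_infdist_add_hausdorff_dist[OF assms(3-5)] .
  also have "\<dots> \<le> hausdorff_dist A B + hausdorff_dist B C"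
    using infdist_le_hausdorff_dist[OF a assms(2,3)] by simp
  finally show "infdist a C \<le> hausdorff_dist A B + hausdorff_dist B C" .
next
  fix c assume c: "c \<in> C"
  have "infdist c A \<le> infdist c B + hausdorff_dist B A"
    using infdist_le_infdist_add_hausdorff_dist[OF assms(3,4,1)] .
  also have "\<dots> \<le> hausdorff_dist B C + hausdorff_dist A B"
    using infdist_le_hausdorff_dist[OF c assms(6,3)]
    by (simp add: hausdorff_dist_commute[of B])
  finally show "infdist c A \<le> hausdorff_dist A B + hausdorff_dist B C"
    by simp
qed (use assms in auto)

lemma hausdorff_dist_le_sqrt_sq_approx:
  assumes "sq_approx c A B" "B \<subseteq> A" "B \<noteq> {}"
  shows "hausdorff_dist A B \<le> sqrt c"
proof (rule hausdorff_dist_le)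
  have close: "infdist a B \<le> sqrt c" if a: "a \<in> A" for a
  proof -
    have "\<exists>y\<in>B. (dist a y)\<^sup>2 \<le> (dist a a)\<^sup>2 + c"
      using assms(1) a unfolding sq_approx_def by blast
    then obtain y where "y \<in> B" "dist a y \<le> sqrt c"
      using real_le_rsqrt by auto
    then show ?thesis
      by (rule infdist_le2)
  qed
  then show "\<And>a. a \<in> A \<Longrightarrow> infdist a B \<le> sqrt c" .
  fix b assume b: "b \<in> B"
  then have "infdist b A = 0"
    using assms(2) by auto
  moreover have "infdist b B \<le> sqrt c"
    using b assms(2) close by blast
  moreover have "infdist b B = 0"
    using b by simp
  ultimately show "infdist b A \<le> sqrt c"
    by linarith
qed (use assms in auto)

lemma hausdorff_dist_tendsto_zero_trans:
  assumes "\<And>m. A m \<noteq> {}" "\<And>m. bounded (A m)" "\<And>m. B m \<noteq> {}" "\<And>m. bounded (B m)"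
    and "L \<noteq> {}" "bounded L"
    and "(\<lambda>m. hausdorff_dist (A m) L) \<longlonglongrightarrow> 0" "(\<lambda>m. hausdorff_dist (A m) (B m)) \<longlonglongrightarrow> 0"
  shows "(\<lambda>m. hausdorff_dist (B m) L) \<longlonglongrightarrow> 0"
proof (rule tendsto_sandwich[OF _ _ tendsto_const tendsto_add_zero[OF assms(8,7)]])
  have "0 \<le> hausdorff_dist (B m) L" for m
    by (rule hausdorff_dist_nonneg[OF assms(3,4,5)])
  then show "\<forall>\<^sub>F m in sequentially. 0 \<le> hausdorff_dist (B m) L"
    by simp
  have "hausdorff_dist (B m) L \<le> hausdorff_dist (A m) (B m) + hausdorff_dist (A m) L" for m
    using hausdorff_dist_triangle[OF assms(3,4,1,2)[of m] assms(5,6)] hausdorff_dist_commute[of "B m" "A m"]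
    by linarith
  then show "\<forall>\<^sub>F m in sequentially. hausdorff_dist (B m) L
      \<le> hausdorff_dist (A m) (B m) + hausdorff_dist (A m) L"
    by simp
qed

lemma sym_iter_convex_hull_tendsto:
  fixes K :: "'a::euclidean_space set"
  assumes "\<And>m. subspace (H m)" "K \<noteq> {}" "compact K"
  shows "(\<lambda>m. hausdorff_dist (sym_iter H (convex hull K) m) (sym_iter H K m)) \<longlonglongrightarrow> 0"
proof -
  define c where "c = (diameter K)\<^sup>2"
  have "sq_approx c (convex hull K) K"
    unfolding c_def using sq_approx_convex_hull compact_imp_bounded[OF assms(3)] .
  then have approx: "sq_approx (c / 2 ^ m) (sym_iter H (convex hull K) m) (sym_iter H K m)" for m
    by (rule sq_approx_sym_iter[OF assms(1)])
  have sub: "sym_iter H K m \<subseteq> sym_iter H (convex hull K) m" for m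
    by (rule sym_iter_mono[OF hull_subset])
  have ne: "sym_iter H K m \<noteq> {}" for m
    by (rule sym_iter_nonempty[OF assms(2)])
  have hull_ne: "sym_iter H (convex hull K) m \<noteq> {}" for m
    using sub ne by blast
  have hull_bounded: "bounded (sym_iter H (convex hull K) m)" for m
    using assms(3) by (intro compact_imp_bounded compact_sym_iter[OF assms(1)] compact_convex_hull)
  have bound: "hausdorff_dist (sym_iter H (convex hull K) m) (sym_iter H K m) \<le> sqrt (c / 2 ^ m)"
    for m
    by (rule hausdorff_dist_le_sqrt_sq_approx[OF approx sub ne])
  have nonneg: "0 \<le> hausdorff_dist (sym_iter H (convex hull K) m) (sym_iter H K m)" for m
    by (rule hausdorff_dist_nonneg[OF hull_ne hull_bounded ne])
  have lim: "(\<lambda>m. sqrt (c / 2 ^ m)) \<longlonglongrightarrow> 0"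
    using tendsto_real_sqrt[OF LIMSEQ_divide_realpow_zero[of 2 c]] by simp
  show ?thesis
  proof (rule tendsto_sandwich[OF _ _ tendsto_const lim])
    show "\<forall>\<^sub>F m in sequentially. 0 \<le> hausdorff_dist (sym_iter H (convex hull K) m) (sym_iter H K m)"
      using nonneg by simp
    show "\<forall>\<^sub>F m in sequentially.
        hausdorff_dist (sym_iter H (convex hull K) m) (sym_iter H K m) \<le> sqrt (c / 2 ^ m)"
      using bound by simp
  qed
qed

theorem corollary9:
  fixes K L :: "'a::euclidean_space set" and H :: "nat \<Rightarrow> 'a set"
  assumes "K \<noteq> {}" "compact K" "convex K"
    and "\<And>m. subspace (H m)"
    and "L \<noteq> {}" "compact L" "convex L"
    and "(\<lambda>m. hausdorff_dist (sym_iter H K m) L) \<longlonglongrightarrow> 0"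
  shows "\<forall>K'. K' \<noteq> {} \<and> compact K' \<and> convex hull K' = K \<longrightarrow>
           (\<lambda>m. hausdorff_dist (sym_iter H K' m) L) \<longlonglongrightarrow> 0"
proof (intro allI impI)
  fix K' :: "'a set" assume "K' \<noteq> {} \<and> compact K' \<and> convex hull K' = K"
  then have K': "K' \<noteq> {}" "compact K'" "convex hull K' = K"
    by auto
  have iter: "sym_iter H A m \<noteq> {}" "bounded (sym_iter H A m)"
    if "A \<noteq> {}" "compact A" for A m
    using that by (simp_all add: sym_iter_nonempty compact_imp_bounded compact_sym_iter assms(4))
  have "(\<lambda>m. hausdorff_dist (sym_iter H K m) (sym_iter H K' m)) \<longlonglongrightarrow> 0"
    using sym_iter_convex_hull_tendsto[OF assms(4) K'(1,2)] by (simp add: K'(3))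
  then show "(\<lambda>m. hausdorff_dist (sym_iter H K' m) L) \<longlonglongrightarrow> 0"
    by (rule hausdorff_dist_tendsto_zero_trans[OF iter[OF assms(1,2)] iter[OF K'(1,2)]
          assms(5) compact_imp_bounded[OF assms(6)] assms(8)])
qed

end
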